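(* The function $f$ is well defined on $(0,\infty)$, differentiable, and satisfies for all $\theta>0$ \[1=4\lambda(\theta)+\exp\big(-f'(\theta)\big).\]
   Context: Define $\lambda:[0,\infty)\to(0,1/4]$ by $\lambda(0)=1/4$ and, for $\theta>0$, $\lambda(\theta)$ is the unique $\lambda\in(0,1/4)$ with $-1+\frac{\operatorname{artanh}(\sqrt{1-4\lambda})}{\sqrt{1-4\lambda}}=\theta$ (this map is a strictly decreasing bijection from $(0,1/4)$ onto $(0,\infty)$). For $\theta>0$ set $f(\theta)=-\ln\lambda(\theta)-2\theta-\theta\ln\big(1-4\lambda(\theta)\big)$. *)

theory Defs
  imports "HOL-Analysis.Analysis"
begin

definition theta_of :: "real \<Rightarrow> real" where
  "theta_of l = -1 + artanh (sqrt (1 - 4*l)) / sqrt (1 - 4*l)"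

text \<open>lambda(0) = 1/4; for theta > 0 the unique l in (0,1/4) with theta_of l = theta.
  (Values for theta < 0 are irrelevant.)\<close>
definition lam :: "real \<Rightarrow> real" where
  "lam \<theta> = (if \<theta> = 0 then 1/4 else (THE l. 0 < l \<and> l < 1/4 \<and> theta_of l = \<theta>))"

definition f :: "real \<Rightarrow> real" where
  "f \<theta> = - ln (lam \<theta>) - 2*\<theta> - \<theta> * ln (1 - 4 * lam \<theta>)"

end

theory Submission
  imports Defs "HOL-Real_Asymp.Real_Asymp" "HOL-Complex_Analysis.Conformal_Mappings"
begin

(* With s = sqrt (1 - 4 l) we have theta_of l = artanh s / s - 1, and the mean value bounds
   s < artanh s < s / (1 - s^2) make theta_of positive and strictly decreasing on (0, 1/4);
   it tends to infinity at 0 and to 0 at 1/4, so lam is its inverse and is differentiable.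
   Differentiating theta_of gives the linear ODE 2 theta' = 4 theta / (1 - 4 l) - 1 / l, whose
   right-hand side is exactly the partial derivative of -ln l - 2 theta - theta ln (1 - 4 l)
   in l. Hence the chain rule gives f' = 2 - 2 - ln (1 - 4 lam). *)

lemma artanh_bounds:
  fixes s :: real
  assumes "0 < s" "s < 1"
  shows "s < artanh s" "artanh s < s / (1 - s\<^sup>2)"
proof -
  have deriv: "(artanh has_real_derivative 1 / (1 - x\<^sup>2)) (at x)" if "0 \<le> x" "x < 1" for x :: real
    using that by (intro artanh_real_has_field_derivative) auto
  have "continuous_on {0..s} artanh"
    using assms by (intro DERIV_atLeastAtMost_imp_continuous_on) (meson deriv le_less_trans)
  moreover have "artanh differentiable (at x)" if "0 < x" "x < s" for x
    using deriv[of x] that assms real_differentiable_def by force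
  ultimately obtain d \<xi> where \<xi>: "0 < \<xi>" "\<xi> < s" "(artanh has_real_derivative d) (at \<xi>)"
    and mvt: "artanh s - artanh 0 = (s - 0) * d"
    using MVT[OF \<open>0 < s\<close>, of artanh] by blast
  then have "d = 1 / (1 - \<xi>\<^sup>2)"
    using deriv[of \<xi>] assms by (auto intro: DERIV_unique)
  with mvt have artanh_s: "artanh s = s / (1 - \<xi>\<^sup>2)" by simp
  have "\<xi>\<^sup>2 < s\<^sup>2" "s\<^sup>2 < 1" "0 < \<xi>\<^sup>2"
    using \<xi> assms by (auto intro: power_strict_mono simp: power_less_one_iff)
  then show "s < artanh s" "artanh s < s / (1 - s\<^sup>2)"
    unfolding artanh_s using assms by (auto simp: field_simps)
qed

lemma artanh_div_has_real_derivative: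
  fixes s :: real
  assumes "0 < s" "s < 1"
  shows "((\<lambda>s. artanh s / s) has_real_derivative (s / (1 - s\<^sup>2) - artanh s) / s\<^sup>2) (at s)"
proof -
  have "\<bar>s\<bar> < 1" using assms by simp
  from DERIV_divide[OF artanh_real_has_field_derivative[OF this] DERIV_ident] assms
  show ?thesis by (simp add: field_simps power2_eq_square)
qed

lemma theta_of_has_real_derivative:
  assumes "0 < l" "l < 1/4"
  shows "(theta_of has_real_derivative 2 * theta_of l / (1 - 4*l) - 1 / (2*l)) (at l)"
proof -
  define s where "s = sqrt (1 - 4*l)"
  have s: "0 < s" "s < 1" "s\<^sup>2 = 1 - 4*l"
    using assms by (auto simp: s_def real_sqrt_less_iff)
  then have "1 - s\<^sup>2 \<noteq> 0" using assms by simp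
  have "((\<lambda>l. sqrt (1 - 4*l)) has_real_derivative - 2 / s) (at l)"
    unfolding s_def using assms by (auto intro!: derivative_eq_intros simp: field_simps)
  from DERIV_chain2[OF artanh_div_has_real_derivative[OF s(1,2), unfolded s_def] this[unfolded s_def]]
  have "((\<lambda>l. artanh (sqrt (1 - 4*l)) / sqrt (1 - 4*l)) has_real_derivative
         (s / (1 - s\<^sup>2) - artanh s) / s\<^sup>2 * (- 2 / s)) (at l)"
    unfolding s_def .
  from DERIV_add[OF DERIV_const[of "-1"] this]
  have "(theta_of has_real_derivative
         (s / (1 - s\<^sup>2) - artanh s) / s\<^sup>2 * (- 2 / s)) (at l)"
    unfolding theta_of_def[abs_def] by simp
  also have "(s / (1 - s\<^sup>2) - artanh s) / s\<^sup>2 * (- 2 / s)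
      = 2 * (artanh s / s - 1) / s\<^sup>2 - 2 / (1 - s\<^sup>2)"
    using s(1) \<open>1 - s\<^sup>2 \<noteq> 0\<close> by (simp add: divide_simps) algebra
  also have "\<dots> = 2 * theta_of l / (1 - 4*l) - 1 / (2*l)"
    unfolding s(3) by (simp add: theta_of_def s_def)
  finally show ?thesis .
qed

lemma theta_of_pos:
  assumes "0 < l" "l < 1/4"
  shows "0 < theta_of l"
proof -
  have "0 < sqrt (1 - 4*l)" "sqrt (1 - 4*l) < 1"
    using assms by (auto simp: real_sqrt_less_iff)
  from artanh_bounds(1)[OF this] show ?thesis
    unfolding theta_of_def using \<open>0 < sqrt (1 - 4*l)\<close> by (simp add: field_simps)
qed

lemma theta_of_derivative_neg:
  assumes "0 < l" "l < 1/4"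
  shows "2 * theta_of l / (1 - 4*l) - 1 / (2*l) < 0"
proof -
  define s where "s = sqrt (1 - 4*l)"
  have s: "0 < s" "s < 1" and s_sq: "1 - 4*l = s\<^sup>2"
    using assms by (auto simp: s_def real_sqrt_less_iff)
  have theta: "theta_of l = artanh s / s - 1" and four_l: "4*l = 1 - s\<^sup>2"
    using s_sq by (simp_all add: theta_of_def s_def)
  have "(1 - s\<^sup>2) * artanh s < s"
    using artanh_bounds(2)[OF s] s_sq assms by (simp add: field_simps)
  then have "(1 - s\<^sup>2) * artanh s / s - (1 - s\<^sup>2) < s\<^sup>2"
    using s by (simp add: divide_less_eq)
  then have "4*l * theta_of l < s\<^sup>2"
    unfolding theta four_l by (simp add: right_diff_distrib)
  then show ?thesis
    unfolding s_sq using s assms by (simp add: field_simps)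
qed

lemma theta_of_strict_antimono:
  assumes "0 < a" "a < b" "b < 1/4"
  shows "theta_of b < theta_of a"
proof (rule DERIV_neg_imp_decreasing[OF \<open>a < b\<close>])
  fix x assume "a \<le> x" "x \<le> b"
  then have "0 < x" "x < 1/4" using assms by linarith+
  then show "\<exists>y. (theta_of has_real_derivative y) (at x) \<and> y < 0"
    using theta_of_has_real_derivative theta_of_derivative_neg by blast
qed

lemma continuous_on_theta_of: "continuous_on {0<..<1/4} theta_of"
  using theta_of_has_real_derivative
  by (intro continuous_at_imp_continuous_on ballI) (auto intro: DERIV_isCont)

lemma theta_of_at_right_0: "filterlim theta_of at_top (at_right 0)"
  unfolding theta_of_def artanh_def by real_asymp

lemma theta_of_at_left_quarter: "(theta_of \<longlongrightarrow> 0) (at_left (1/4))"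
  unfolding theta_of_def artanh_def by real_asymp

lemma theta_of_surj:
  assumes "0 < \<theta>"
  obtains l where "0 < l" "l < 1/4" "theta_of l = \<theta>"
proof -
  have "\<forall>\<^sub>F l in at_right 0. \<theta> < theta_of l \<and> l \<in> {0<..<1/8}"
    using theta_of_at_right_0[unfolded filterlim_at_top_dense] eventually_at_right_real[of 0 "1/8"]
    by (auto elim: eventually_elim2)
  then obtain a where a: "\<theta> < theta_of a" "0 < a" "a < 1/8"
    using eventually_happens[of _ "at_right (0::real)"] by auto
  have "\<forall>\<^sub>F l in at_left (1/4). theta_of l < \<theta> \<and> l \<in> {1/8<..<1/4}"
    using order_tendstoD(2)[OF theta_of_at_left_quarter assms] eventually_at_left_real[of "1/8" "1/4"]
    by (auto elim: eventually_elim2)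
  then obtain b where b: "theta_of b < \<theta>" "1/8 < b" "b < 1/4"
    using eventually_happens[of _ "at_left (1/4::real)"] by auto
  have "continuous_on {a..b} theta_of"
    using a b by (auto intro: continuous_on_subset[OF continuous_on_theta_of])
  then obtain l where "a \<le> l" "l \<le> b" "theta_of l = \<theta>"
    using IVT2'[of theta_of b \<theta> a] a b by auto
  with a b show ?thesis by (intro that) auto
qed

lemma theta_of_ex1:
  assumes "0 < \<theta>"
  shows "\<exists>!l. 0 < l \<and> l < 1/4 \<and> theta_of l = \<theta>"
proof -
  have "l = l'" if "0 < l" "l < 1/4" "0 < l'" "l' < 1/4" "theta_of l = theta_of l'" for l l'
    using that theta_of_strict_antimono[of l l'] theta_of_strict_antimono[of l' l]
    by (cases l l' rule: linorder_cases) auto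
  with theta_of_surj[OF assms] show ?thesis by metis
qed

lemma
  assumes "0 < \<theta>"
  shows lam_bounds: "0 < lam \<theta>" "lam \<theta> < 1/4"
    and theta_of_lam: "theta_of (lam \<theta>) = \<theta>"
  using theI'[OF theta_of_ex1[OF assms]] assms by (simp_all add: lam_def)

lemma lam_theta_of:
  assumes "0 < l" "l < 1/4"
  shows "lam (theta_of l) = l"
  using theta_of_ex1[OF theta_of_pos[OF assms]] lam_bounds[OF theta_of_pos[OF assms]]
    theta_of_lam[OF theta_of_pos[OF assms]] assms by blast

lemma lam_has_real_derivative:
  assumes "0 < \<theta>"
  shows "(lam has_real_derivative inverse (2 * \<theta> / (1 - 4 * lam \<theta>) - 1 / (2 * lam \<theta>))) (at \<theta>)"
proof -
  have "(lam has_real_derivative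
         inverse (2 * theta_of (lam \<theta>) / (1 - 4 * lam \<theta>) - 1 / (2 * lam \<theta>))) (at (theta_of (lam \<theta>)))"
    using lam_bounds[OF assms] theta_of_derivative_neg[of "lam \<theta>"]
    by (intro has_field_derivative_inverse_strong[where S = "{0<..<1/4}"]
        theta_of_has_real_derivative continuous_on_theta_of lam_theta_of) auto
  then show ?thesis using theta_of_lam[OF assms] by simp
qed

lemma f_has_real_derivative:
  assumes "0 < \<theta>"
  shows "(f has_real_derivative - ln (1 - 4 * lam \<theta>)) (at \<theta>)"
proof -
  define l where "l = lam \<theta>"
  define D where "D = 2 * \<theta> / (1 - 4*l) - 1 / (2*l)"
  have l: "0 < l" "l < 1/4" using lam_bounds[OF assms] by (simp_all add: l_def)
  have "D \<noteq> 0"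
    using theta_of_derivative_neg[OF l] theta_of_lam[OF assms] by (simp add: D_def l_def)
  have D2: "4 * \<theta> / (1 - 4*l) - 1 / l = 2 * D"
    using l by (simp add: D_def field_simps)
  have "(f has_real_derivative
          - (inverse D / l) - 2 - (ln (1 - 4*l) + \<theta> * (- (4 * inverse D)) / (1 - 4*l))) (at \<theta>)"
    unfolding f_def[abs_def]
    using lam_has_real_derivative[OF assms] l
    by (auto intro!: derivative_eq_intros simp: l_def D_def)
  also have "- (inverse D / l) - 2 - (ln (1 - 4*l) + \<theta> * (- (4 * inverse D)) / (1 - 4*l))
      = - ln (1 - 4*l) + inverse D * (4 * \<theta> / (1 - 4*l) - 1 / l) - 2"
    using l \<open>D \<noteq> 0\<close> by (simp add: field_simps)
  also have "\<dots> = - ln (1 - 4 * lam \<theta>)"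
    unfolding D2 using \<open>D \<noteq> 0\<close> by (simp add: l_def)
  finally show ?thesis .
qed

theorem proposition2:
  shows "(\<forall>\<theta>::real. \<theta> > 0 \<longrightarrow> (\<exists>!l. 0 < l \<and> l < 1/4 \<and> theta_of l = \<theta>))
    \<and> (\<forall>\<theta>::real. \<theta> > 0 \<longrightarrow>
          f differentiable (at \<theta>) \<and> 1 = 4 * lam \<theta> + exp (- deriv f \<theta>))"
proof (intro conjI allI impI)
  fix \<theta> :: real
  assume "0 < \<theta>"
  then show "\<exists>!l. 0 < l \<and> l < 1/4 \<and> theta_of l = \<theta>" by (rule theta_of_ex1)
  note f' = f_has_real_derivative[OF \<open>0 < \<theta>\<close>]
  then show "f differentiable (at \<theta>)" using real_differentiable_def by blast
  have "exp (- deriv f \<theta>) = 1 - 4 * lam \<theta>"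
    using DERIV_imp_deriv[OF f'] lam_bounds[OF \<open>0 < \<theta>\<close>] by simp
  then show "1 = 4 * lam \<theta> + exp (- deriv f \<theta>)" by simp
qed

end
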